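(* With $\mathcal N=\mathbb N^*$, $\Omega=\{x,y\}$, $U$ and the operation $\odot$ as in the context, one has $$S_{\mathcal N}\odot U=S_\Omega,\qquad T_{\mathcal N}\odot U=T_\Omega.$$
   Context: Words and moulds: $\underline{\mathcal N}$, $\underline\Omega$ are the sets of finite words over $\mathcal N$, $\Omega$ (empty word $\emptyset$, length $r(\cdot)$); moulds are functions to $\mathbb Q$ with product $(M\times N)^{\underline n}=\sum_{\underline n=\underline a\underline b}M^{\underline a}N^{\underline b}$, unit $\mathbb 1$, $e^M=\sum_kM^{\times k}/k!$ ($M^\emptyset=0$), $\log M=\sum_{k\ge1}\frac{(-1)^{k-1}}k(M-\mathbb 1)^{\times k}$ ($M^\emptyset=1$). $S_{\mathcal N}^\emptyset=1$, $S_{\mathcal N}^{n_1\cdots n_r}=1/(n_r(n_r+n_{r-1})\cdots(n_r+\cdots+n_1))$, $T_{\mathcal N}=\log S_{\mathcal N}$. $I_x$ (resp. $I_y$) is $1$ on the one-letter word $x$ (resp. $y$) and $0$ elsewhere; $S_\Omega=e^{I_x}\times e^{I_y}$, i.e. $S_\Omega^{x^py^q}=\frac1{p!q!}$ and $S_\Omega$ vanishes on words not of the form $x^py^q$; $T_\Omega=\log S_\Omega$. $U\in\mathbb Q^{\underline\Omega}$: $U^x=1$, $U^{x^pyx^q}=\frac{(-1)^q}{p!q!}$ ($p,q\in\mathbb N$), $0$ otherwise. For $M\in\mathbb Q^{\underline{\mathcal N}}$, $(M\odot U)^\emptyset=M^\emptyset$ and for nonempty $\underline\omega$, $(M\odot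 U)^{\underline\omega}=\sum_{s\ge1}\sum_{\underline\omega=\underline\omega^1\cdots\underline\omega^s,\ \underline\omega^i\ne\emptyset}M^{r(\underline\omega^1)\cdots r(\underline\omega^s)}U^{\underline\omega^1}\cdots U^{\underline\omega^s}$. *)

theory Defs
  imports Complex_Main
begin

type_synonym 'a mould = "'a list \<Rightarrow> rat"

definition mone :: "'a mould" where
  "mone w = (if w = [] then 1 else 0)"

definition mmult :: "'a mould \<Rightarrow> 'a mould \<Rightarrow> 'a mould" where
  "mmult M N w = (\<Sum>k\<le>length w. M (take k w) * N (drop k w))"

primrec mpow :: "'a mould \<Rightarrow> nat \<Rightarrow> 'a mould" where
  "mpow M 0 = mone"
| "mpow M (Suc k) = mmult M (mpow M k)"

text \<open>Exponential, for moulds with M [] = 0: the series is finite on each word,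
  since terms with k > length w vanish.\<close>
definition mexp :: "'a mould \<Rightarrow> 'a mould" where
  "mexp M w = (\<Sum>k\<le>length w. mpow M k w / of_nat (fact k))"

text \<open>Logarithm, for moulds with M [] = 1: again terms with k > length w vanish.\<close>
definition mlog :: "'a mould \<Rightarrow> 'a mould" where
  "mlog M w = (\<Sum>k\<in>{1..length w}.
      (-1) ^ (k - 1) / of_nat k * mpow (\<lambda>u. M u - mone u) k w)"

text \<open>Alphabet N = positive naturals (letters are nat; only positive letters ever occur
  in the statement).  S_N^{n1...nr} = 1/(n_r (n_r+n_{r-1}) ... (n_r+...+n_1)).\<close>
definition S_N :: "nat mould" where
  "S_N w = 1 / of_nat (\<Prod>k<length w. sum_list (drop k w))"

definition T_N :: "nat mould" where
  "T_N = mlog S_N"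

datatype xy = X | Y

definition I_x :: "xy mould" where
  "I_x w = (if w = [X] then 1 else 0)"

definition I_y :: "xy mould" where
  "I_y w = (if w = [Y] then 1 else 0)"

definition S_Omega :: "xy mould" where
  "S_Omega = mmult (mexp I_x) (mexp I_y)"

definition T_Omega :: "xy mould" where
  "T_Omega = mlog S_Omega"

definition U :: "xy mould" where
  "U w = (if w = [X] then 1
          else if (\<exists>p q. w = replicate p X @ [Y] @ replicate q X)
          then (let p = (THE p. \<exists>q. w = replicate p X @ [Y] @ replicate q X);
                    q = (THE q. \<exists>p. w = replicate p X @ [Y] @ replicate q X)
                in (-1) ^ q / (of_nat (fact p) * of_nat (fact q)))
          else 0)"

definition odot :: "nat mould \<Rightarrow> 'a mould \<Rightarrow> 'a mould" where
  "odot M V w = (if w = [] then M []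
     else (\<Sum>ws\<in>{ws. concat ws = w \<and> (\<forall>u\<in>set ws. u \<noteq> [])}.
             M (map length ws) * prod_list (map V ws)))"

end

theory Submission
  imports Defs
begin

text \<open>The map \<open>M \<mapsto> M \<odot> U\<close> is a morphism of mould algebras: cutting a factorization
  of a word at one of its cut points gives \<open>(M \<times> N) \<odot> U = (M \<odot> U) \<times> (N \<odot> U)\<close>, and the
  map is linear and preserves the unit, so it commutes with powers and hence with \<open>log\<close>. So the
  second identity follows from the first.

  For the first, \<open>S_N(n v) = S_N(v) / (n + n\<^sub>1 + \<dots> + n\<^sub>r)\<close> shows, after splitting off the first
  factor, that \<open>M = S_N \<odot> U\<close> satisfies \<open>|w| M(w) = (U \<times> M)(w)\<close>. \<open>S_\<Omega>\<close> satisfies the same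
  equation: on \<open>x\<^sup>p y\<^sup>n\<close> both sides equal \<open>(p + n) / (p! n!)\<close>, and on words not of this form
  both sides vanish, thanks to the alternating sum \<open>\<Sum>\<^sub>j (-1)\<^sup>j / (j! (m - j)!) = 0\<close>. Since
  \<open>U(\<emptyset>) = 0\<close>, this equation determines a mould from its value at the empty word.\<close>

section \<open>Composition with a mould as an algebra morphism\<close>

definition factorizations :: "'a list \<Rightarrow> 'a list list set" where
  "factorizations w = {ws. concat ws = w \<and> (\<forall>u\<in>set ws. u \<noteq> [])}"

lemma factorizations_Nil [simp]: "factorizations [] = {[]}"
  unfolding factorizations_def by auto

lemma factorizations_by_first_factor:
  assumes "w \<noteq> []"
  shows "factorizations w = (\<Union>k\<in>{1..length w}. Cons (take k w) ` factorizations (drop k w))"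
proof
  show "factorizations w \<subseteq> (\<Union>k\<in>{1..length w}. Cons (take k w) ` factorizations (drop k w))"
  proof
    fix ws assume "ws \<in> factorizations w"
    hence c: "concat ws = w" and ne: "\<forall>u\<in>set ws. u \<noteq> []" by (auto simp: factorizations_def)
    then obtain u ws' where ws: "ws = u # ws'" using assms by (cases ws) auto
    have "u \<noteq> []" "w = u @ concat ws'" using c ne ws by auto
    then show "ws \<in> (\<Union>k\<in>{1..length w}. Cons (take k w) ` factorizations (drop k w))"
      using ne ws by (auto simp: factorizations_def Suc_le_eq intro!: bexI[of _ "length u"])
  qed
qed (auto simp: factorizations_def)

lemma finite_factorizations [simp]: "finite (factorizations w)"
proof (induction w rule: length_induct)
  case (1 w)
  then show ?case
    by (cases "w = []") (auto simp: factorizations_by_first_factor)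
qed

lemma length_le_if_factorizations: "ws \<in> factorizations w \<Longrightarrow> length ws \<le> length w"
proof (induction ws arbitrary: w)
  case (Cons u ws)
  then have "u \<noteq> []" "w = u @ concat ws" "ws \<in> factorizations (concat ws)"
    by (auto simp: factorizations_def)
  with Cons.IH[of "concat ws"] show ?case
    by (cases u) auto
qed simp

lemma sum_list_lengths_factorizations:
  "ws \<in> factorizations w \<Longrightarrow> sum_list (map length ws) = length w"
  by (auto simp: factorizations_def length_concat)

lemma odot_eq_sum_factorizations:
  "odot M V w = (\<Sum>ws\<in>factorizations w. M (map length ws) * prod_list (map V ws))"
  by (simp add: odot_def factorizations_def[symmetric])

lemma bij_betw_cut_factorizations:
  "bij_betw (\<lambda>(k, a, b). (a @ b, length a))
     (SIGMA k:{..length w}. factorizations (take k w) \<times> factorizations (drop k w))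
     (SIGMA ws:factorizations w. {..length ws})"
proof (rule bij_betw_byWitness[where f' = "\<lambda>(ws, j). (length (concat (take j ws)), take j ws, drop j ws)"])
  have "(length (concat (take j ws)), take j ws, drop j ws) \<in>
      (SIGMA k:{..length w}. factorizations (take k w) \<times> factorizations (drop k w))"
    if ws: "ws \<in> factorizations w" "j \<le> length ws" for ws j
  proof -
    from ws have "w = concat (take j ws) @ concat (drop j ws)"
      by (simp add: factorizations_def flip: concat_append)
    with ws show ?thesis
      by (auto simp: factorizations_def dest: in_set_takeD in_set_dropD)
  qed
  then show "(\<lambda>(ws, j). (length (concat (take j ws)), take j ws, drop j ws)) `
      (SIGMA ws:factorizations w. {..length ws})
    \<subseteq> (SIGMA k:{..length w}. factorizations (take k w) \<times> factorizations (drop k w))"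
    by auto
qed (auto simp: factorizations_def)

lemma odot_mmult: "odot (mmult M N) V w = mmult (odot M V) (odot N V) w"
proof -
  let ?P = "SIGMA ws:factorizations w. {..length ws}"
  let ?Q = "SIGMA k:{..length w}. factorizations (take k w) \<times> factorizations (drop k w)"
  define h where "h = (\<lambda>(ws, j). M (map length (take j ws)) * N (map length (drop j ws))
       * (prod_list (map V (take j ws)) * prod_list (map V (drop j ws))))"
  have prod_split: "prod_list (map V ws) = prod_list (map V (take j ws)) * prod_list (map V (drop j ws))"
    for ws j
    by (metis append_take_drop_id map_append prod_list.append)
  have term_eq: "M (map length (take j ws)) * N (map length (drop j ws)) * prod_list (map V ws)
      = h (ws, j)" for ws j
    by (simp add: h_def prod_split[of ws j] mult_ac)
  have "odot (mmult M N) V w = (\<Sum>ws\<in>factorizations w. \<Sum>j\<le>length ws. h (ws, j))"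
    unfolding odot_eq_sum_factorizations mmult_def
    by (simp add: sum_distrib_right take_map drop_map term_eq)
  also have "\<dots> = sum h ?P"
    by (simp add: sum.Sigma)
  also have "\<dots> = (\<Sum>(k, a, b)\<in>?Q. h (a @ b, length a))"
    using sum.reindex_bij_betw[OF bij_betw_cut_factorizations, of h] by (simp add: split_def)
  also have "\<dots> = (\<Sum>k\<le>length w. \<Sum>(a, b)\<in>factorizations (take k w) \<times> factorizations (drop k w).
      M (map length a) * prod_list (map V a) * (N (map length b) * prod_list (map V b)))"
    by (simp add: sum.Sigma h_def split_def mult_ac)
  also have "\<dots> = mmult (odot M V) (odot N V) w"
    by (simp add: mmult_def odot_eq_sum_factorizations sum_product sum.cartesian_product)
  finally show ?thesis .
qed

lemma odot_mone: "odot mone V w = mone w"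
proof -
  have "odot mone V w = (\<Sum>ws\<in>factorizations w. if ws = [] then 1 else 0)"
    unfolding odot_eq_sum_factorizations by (intro sum.cong refl) (simp add: mone_def)
  also have "\<dots> = (if [] \<in> factorizations w then 1 else 0)"
    by simp
  also have "\<dots> = mone w"
    by (auto simp: factorizations_def mone_def)
  finally show ?thesis .
qed

lemma odot_diff: "odot (\<lambda>u. M u - N u) V w = odot M V w - odot N V w"
  unfolding odot_eq_sum_factorizations by (simp add: left_diff_distrib sum_subtractf)

lemma odot_mpow: "odot (mpow M k) V w = mpow (odot M V) k w"
proof (induction k arbitrary: w)
  case 0
  then show ?case by (simp add: odot_mone)
next
  case (Suc k)
  have "odot (mpow M (Suc k)) V w = mmult (odot M V) (odot (mpow M k) V) w"
    by (simp add: odot_mmult)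
  also have "\<dots> = mpow (odot M V) (Suc k) w"
    using Suc by (simp add: mmult_def)
  finally show ?case .
qed

lemma mpow_eq_0_if_length_less:
  assumes "M [] = 0" "length w < k"
  shows "mpow M k w = 0"
  using assms(2)
proof (induction k arbitrary: w)
  case (Suc k)
  have "M (take j w) * mpow M k (drop j w) = 0" if "j \<le> length w" for j
    using Suc that assms(1) by (cases "j = 0") auto
  then show ?case
    unfolding mpow.simps mmult_def by (intro sum.neutral) simp
qed simp

lemma mlog_eq_sum_upto:
  assumes "M [] = 1" "length w \<le> n"
  shows "mlog M w = (\<Sum>k\<in>{1..n}. (-1) ^ (k - 1) / of_nat k * mpow (\<lambda>u. M u - mone u) k w)"
  unfolding mlog_def
proof (rule sum.mono_neutral_left)
  show "\<forall>k\<in>{1..n} - {1..length w}. (-1) ^ (k - 1) / of_nat k * mpow (\<lambda>u. M u - mone u) k w = 0"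
    using assms by (auto simp: mpow_eq_0_if_length_less mone_def)
qed (use assms in auto)

lemma odot_mlog:
  assumes "M [] = 1"
  shows "odot (mlog M) V w = mlog (odot M V) w"
proof -
  define c :: "nat \<Rightarrow> rat" where "c k = (-1) ^ (k - 1) / of_nat k" for k
  let ?A = "\<lambda>u. M u - mone u"
  have odot_diff_mone: "odot ?A V = (\<lambda>u. odot M V u - mone u)"
    by (simp add: fun_eq_iff odot_diff odot_mone)
  have "odot (mlog M) V w
      = (\<Sum>ws\<in>factorizations w. (\<Sum>k\<in>{1..length w}. c k * mpow ?A k (map length ws))
          * prod_list (map V ws))"
    unfolding odot_eq_sum_factorizations
  proof (rule sum.cong[OF refl])
    fix ws assume "ws \<in> factorizations w"
    then show "mlog M (map length ws) * prod_list (map V ws)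
        = (\<Sum>k\<in>{1..length w}. c k * mpow ?A k (map length ws)) * prod_list (map V ws)"
      using mlog_eq_sum_upto[where M = M, OF assms, of "map length ws" "length w"]
      by (simp add: c_def length_le_if_factorizations)
  qed
  also have "\<dots> = (\<Sum>k\<in>{1..length w}. c k * odot (mpow ?A k) V w)"
    unfolding odot_eq_sum_factorizations
    by (simp add: sum_distrib_right sum_distrib_left mult_ac sum.swap[of _ "factorizations w"])
  also have "\<dots> = (\<Sum>k\<in>{1..length w}. c k * mpow (\<lambda>u. odot M V u - mone u) k w)"
    by (simp add: odot_mpow odot_diff_mone)
  finally show ?thesis
    unfolding mlog_def c_def .
qed

lemma odot_by_first_factor:
  assumes "w \<noteq> []"
  shows "odot M V w = (\<Sum>k\<in>{1..length w}. \<Sum>ws\<in>factorizations (drop k w).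
            M (k # map length ws) * (V (take k w) * prod_list (map V ws)))"
proof -
  have "odot M V w = (\<Sum>k\<in>{1..length w}. \<Sum>ws\<in>Cons (take k w) ` factorizations (drop k w).
            M (map length ws) * prod_list (map V ws))"
    unfolding odot_eq_sum_factorizations factorizations_by_first_factor[OF assms]
    by (rule sum.UNION_disjoint) (auto, metis length_take min_absorb2)
  also have "\<dots> = (\<Sum>k\<in>{1..length w}. \<Sum>ws\<in>factorizations (drop k w).
            M (k # map length ws) * (V (take k w) * prod_list (map V ws)))"
    by (rule sum.cong[OF refl], subst sum.reindex) (auto simp: min_def)
  finally show ?thesis .
qed

section \<open>The length equation for \<open>S_N \<odot> V\<close>\<close>

lemma S_N_Nil [simp]: "S_N [] = 1"
  by (simp add: S_N_def)

lemma S_N_Cons: "S_N (n # v) = S_N v / of_nat (n + sum_list v)"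
proof -
  have "(\<Prod>k<length (n # v). sum_list (drop k (n # v)))
      = (n + sum_list v) * (\<Prod>k<length v. sum_list (drop k v))"
    by (simp only: length_Cons prod.lessThan_Suc_shift) simp
  then show ?thesis unfolding S_N_def by (simp add: field_simps)
qed

lemma odot_S_N_eigen:
  assumes "V [] = 0"
  shows "of_nat (length w) * odot S_N V w = mmult V (odot S_N V) w"
proof (cases "w = []")
  case True
  then show ?thesis using assms by (simp add: mmult_def)
next
  case False
  have "odot S_N V w = (\<Sum>k\<in>{1..length w}. \<Sum>ws\<in>factorizations (drop k w).
      V (take k w) * (S_N (map length ws) * prod_list (map V ws)) / of_nat (length w))"
    unfolding odot_by_first_factor[OF False]
  proof (intro sum.cong refl)
    fix k ws assume "k \<in> {1..length w}" "ws \<in> factorizations (drop k w)"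
    then have "k + sum_list (map length ws) = length w"
      by (simp add: sum_list_lengths_factorizations)
    then show "S_N (k # map length ws) * (V (take k w) * prod_list (map V ws))
        = V (take k w) * (S_N (map length ws) * prod_list (map V ws)) / of_nat (length w)"
      by (simp add: S_N_Cons)
  qed
  also have "\<dots> = (\<Sum>k\<in>{1..length w}. V (take k w) * odot S_N V (drop k w)) / of_nat (length w)"
    by (simp add: odot_eq_sum_factorizations sum_divide_distrib sum_distrib_left)
  also have "(\<Sum>k\<in>{1..length w}. V (take k w) * odot S_N V (drop k w)) = mmult V (odot S_N V) w"
    using assms by (simp add: mmult_def atMost_atLeast0 sum.atLeast_Suc_atMost)
  finally show ?thesis using False by simp
qed

section \<open>The mould \<open>S_\<Omega>\<close>\<close>

lemma eq_replicate_iff: "w = replicate k c \<longleftrightarrow> k = length w \<and> set w \<subseteq> {c}"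
  by (auto intro: replicate_eqI)

lemma mpow_letter:
  "mpow (\<lambda>u. if u = [c] then 1 else 0) k w = (if w = replicate k c then 1 else 0)"
proof (induction k arbitrary: w)
  case 0
  then show ?case by (simp add: mone_def)
next
  case (Suc k)
  show ?case
  proof (cases w)
    case Nil
    then show ?thesis by (simp add: mmult_def)
  next
    case (Cons a v)
    let ?I = "\<lambda>u. if u = [c] then 1 else 0 :: rat"
    have "mpow ?I (Suc k) w = (\<Sum>j\<le>length v. ?I (a # take j v) * mpow ?I k (drop j v))"
      unfolding mpow.simps mmult_def Cons
      by (simp only: length_Cons sum.atMost_Suc_shift) simp
    also have "\<dots> = (\<Sum>j\<le>length v. if j = 0 then ?I [a] * mpow ?I k v else 0)"
      by (rule sum.cong) auto
    finally show ?thesis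
      using Suc by (simp add: Cons Cons_replicate_eq)
  qed
qed

lemma mexp_letter:
  "mexp (\<lambda>u. if u = [c] then 1 else 0) w = (if set w \<subseteq> {c} then 1 / fact (length w) else 0)"
proof -
  have "mexp (\<lambda>u. if u = [c] then 1 else 0) w
      = (\<Sum>k\<le>length w. if k = length w then (if set w \<subseteq> {c} then 1 else 0) / fact k else 0)"
    unfolding mexp_def by (rule sum.cong) (auto simp: mpow_letter eq_replicate_iff)
  then show ?thesis by simp
qed

lemma S_Omega_eq_sum:
  "S_Omega w = (\<Sum>k\<le>length w. if set (take k w) \<subseteq> {X} \<and> set (drop k w) \<subseteq> {Y}
     then 1 / (fact k * fact (length w - k)) else 0)"
  unfolding S_Omega_def mmult_def I_x_def[abs_def] I_y_def[abs_def]
  by (rule sum.cong) (auto simp: mexp_letter min_def)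

lemma S_Omega_replicate: "S_Omega (replicate p X @ replicate q Y) = 1 / (fact p * fact q)"
proof -
  let ?w = "replicate p X @ replicate q Y"
  have "set (take k ?w) \<subseteq> {X} \<and> set (drop k ?w) \<subseteq> {Y} \<longleftrightarrow> k = p" if "k \<le> p + q" for k
    using that by (cases "k \<le> p") (auto simp: set_replicate_conv_if)
  then have "S_Omega ?w = (\<Sum>k\<le>length ?w. if k = p then 1 / (fact p * fact q) else 0)"
    unfolding S_Omega_eq_sum by (intro sum.cong) auto
  then show ?thesis by simp
qed

lemma S_Omega_Y_before_X:
  assumes "X \<in> set v"
  shows "S_Omega (u @ Y # v) = 0"
  unfolding S_Omega_eq_sum
proof (intro sum.neutral ballI)
  fix k
  have "\<not> (set (take k (u @ Y # v)) \<subseteq> {X} \<and> set (drop k (u @ Y # v)) \<subseteq> {Y})"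
  proof (cases "k \<le> length u")
    case True
    then show ?thesis using assms by auto
  next
    case False
    then have "Y \<in> set (take k (u @ Y # v))"
      by (auto simp: take_Cons')
    then show ?thesis by auto
  qed
  then show "(if set (take k (u @ Y # v)) \<subseteq> {X} \<and> set (drop k (u @ Y # v)) \<subseteq> {Y}
     then 1 / (fact k * fact (length (u @ Y # v) - k)) else 0) = 0"
    by (simp only: if_False)
qed

section \<open>The length equation for \<open>S_\<Omega>\<close>\<close>

lemma U_Nil [simp]: "U [] = 0"
  by (simp add: U_def)

lemma U_replicate_X: "U (replicate k X) = (if k = 1 then 1 else 0)"
proof -
  have "replicate k X = [X] \<longleftrightarrow> k = 1"
    by (cases k) auto
  moreover have "replicate k X \<noteq> replicate p X @ [Y] @ replicate q X" for p q
    by (metis Un_iff in_set_replicate list.set_intros(1) set_append xy.distinct(1))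
  ultimately show ?thesis
    by (auto simp: U_def)
qed

lemma U_one_Y: "U (replicate p X @ Y # replicate q X) = (-1) ^ q / (fact p * fact q)"
proof -
  let ?w = "replicate p X @ Y # replicate q X"
  have unique: "?w = replicate p' X @ [Y] @ replicate q' X \<longleftrightarrow> p' = p \<and> q' = q" for p' q'
    by (auto simp: append_Cons_eq_iff)
  have "?w \<noteq> [X]"
    by (cases p) auto
  moreover have "(THE p'. \<exists>q'. ?w = replicate p' X @ [Y] @ replicate q' X) = p"
    "(THE q'. \<exists>p'. ?w = replicate p' X @ [Y] @ replicate q' X) = q"
    by (simp_all only: unique) auto
  moreover have "\<exists>p' q'. ?w = replicate p' X @ [Y] @ replicate q' X"
    by auto
  ultimately show ?thesis
    unfolding U_def by (simp only: if_False if_True Let_def) simp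
qed

lemma U_two_Y:
  assumes "Y \<in> set u" "Y \<in> set v"
  shows "U (u @ v) = 0"
proof -
  have "2 \<le> length (filter (\<lambda>c. c = Y) (u @ v))"
    using assms by (auto simp: Suc_le_eq filter_empty_conv length_greater_0_conv
        simp flip: Suc_1 dest!: split_list[of Y u])
  then have "u @ v \<noteq> replicate p X @ [Y] @ replicate q X" for p q
    by (intro notI) (drule arg_cong[where f = "\<lambda>w. length (filter (\<lambda>c. c = Y) w)"], simp)
  moreover have "u @ v \<noteq> [X]"
    using assms by (cases u; cases v) auto
  ultimately show ?thesis
    by (simp add: U_def)
qed

lemma mmult_append:
  "mmult M N (a @ b) = (\<Sum>k\<le>length a. M (take k a) * N (drop k a @ b))
     + (\<Sum>k\<in>{1..length b}. M (a @ take k b) * N (drop k b))"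
proof -
  let ?f = "\<lambda>k. M (take k (a @ b)) * N (drop k (a @ b))"
  have "mmult M N (a @ b) = sum ?f {0..length a + length b}"
    by (simp add: mmult_def atLeast0AtMost)
  also have "\<dots> = sum ?f {0..length a} + sum ?f {length a + 1..length a + length b}"
    by (rule sum.ub_add_nat) simp
  also have "sum ?f {length a + 1..length a + length b} = (\<Sum>k\<in>{1..length b}. ?f (k + length a))"
    using sum.shift_bounds_cl_nat_ivl[of ?f 1 "length a" "length b"] by (simp add: add.commute)
  also have "\<dots> = (\<Sum>k\<in>{1..length b}. M (a @ take k b) * N (drop k b))"
    by simp
  also have "sum ?f {0..length a} = (\<Sum>k\<le>length a. M (take k a) * N (drop k a @ b))"
    by (simp add: atLeast0AtMost)
  finally show ?thesis .
qed

lemma mmult_append_Cons: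
  "mmult M N (a @ c # s) = (\<Sum>k\<le>length a. M (take k a) * N (drop k a @ c # s))
     + mmult (\<lambda>v. M (a @ c # v)) N s"
proof -
  have "(\<Sum>k\<in>{1..length (c # s)}. M (a @ take k (c # s)) * N (drop k (c # s)))
      = (\<Sum>k\<in>{0..length s}. M (a @ c # take k s) * N (drop k s))"
    unfolding length_Cons One_nat_def sum.shift_bounds_cl_Suc_ivl by simp
  also have "\<dots> = mmult (\<lambda>v. M (a @ c # v)) N s"
    by (simp add: mmult_def atLeast0AtMost)
  finally show ?thesis
    by (simp only: mmult_append[of M N a "c # s"])
qed

lemma sum_U_replicate_X:
  "(\<Sum>k\<le>p. U (take k (replicate p X)) * N (drop k (replicate p X) @ b))
     = (if p = 0 then 0 else N (replicate (p - 1) X @ b))"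
proof -
  have "(\<Sum>k\<le>p. U (take k (replicate p X)) * N (drop k (replicate p X) @ b))
      = (\<Sum>k\<le>p. if k = 1 then N (replicate (p - 1) X @ b) else 0)"
    by (rule sum.cong) (simp_all add: U_replicate_X min_def)
  then show ?thesis by simp
qed

lemma mmult_U_after_first_Y:
  assumes "r = [] \<or> hd r = Y"
  shows "mmult U N (replicate p X @ Y # replicate m X @ r)
    = (if p = 0 then 0 else N (replicate (p - 1) X @ Y # replicate m X @ r))
      + (\<Sum>j\<le>m. (-1) ^ j / (fact p * fact j) * N (replicate (m - j) X @ r))"
proof -
  let ?U' = "\<lambda>v. U (replicate p X @ Y # v)"
  have "?U' (replicate m X @ take k r) = 0" if "k \<in> {1..length r}" for k
  proof -
    from assms that have "Y \<in> set (replicate m X @ take k r)"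
      by (cases r; cases k) auto
    then show ?thesis
      using U_two_Y[of "replicate p X @ [Y]"] by simp
  qed
  then have "mmult ?U' N (replicate m X @ r)
      = (\<Sum>k\<le>m. ?U' (take k (replicate m X)) * N (drop k (replicate m X) @ r))"
    by (simp add: mmult_append)
  also have "\<dots> = (\<Sum>j\<le>m. (-1) ^ j / (fact p * fact j) * N (replicate (m - j) X @ r))"
    by (rule sum.cong) (simp_all add: U_one_Y)
  finally show ?thesis
    using mmult_append_Cons[of U N "replicate p X" Y] sum_U_replicate_X[of p N] by simp
qed

lemma sum_alternating_inverse_fact:
  assumes "m > 0"
  shows "(\<Sum>j\<le>m. (-1) ^ j / (fact j * fact (m - j)) :: 'a :: field_char_0) = 0"
proof -
  have "(\<Sum>j\<le>m. (-1) ^ j / (fact j * fact (m - j)) :: 'a)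
      = (\<Sum>j\<le>m. (-1) ^ j * of_nat (m choose j)) / fact m"
    by (auto simp: sum_divide_distrib binomial_fact field_simps intro!: sum.cong)
  also have "\<dots> = 0"
    using choose_alternating_sum[OF assms] by simp
  finally show ?thesis .
qed

lemma of_nat_div_fact:
  assumes "p > 0"
  shows "(of_nat p / fact p :: 'a :: field_char_0) = 1 / fact (p - 1)"
  using assms by (simp add: fact_reduce[of p])

lemma X_prefix_decomposition:
  obtains p r where "w = replicate p X @ r" "r = [] \<or> hd r = Y"
proof -
  let ?P = "\<lambda>c. c = X"
  have "w = takeWhile ?P w @ dropWhile ?P w"
    by simp
  also have "takeWhile ?P w = replicate (length (takeWhile ?P w)) X"
    by (auto intro: replicate_eqI dest: set_takeWhileD)
  finally have "w = replicate (length (takeWhile ?P w)) X @ dropWhile ?P w" .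
  moreover have "hd (dropWhile ?P w) = Y" if "dropWhile ?P w \<noteq> []"
    using hd_dropWhile[OF that] by (cases "hd (dropWhile ?P w)") simp_all
  ultimately show thesis
    using that by blast
qed

lemma mmult_U_S_Omega_replicate_X:
  "mmult U S_Omega (replicate p X) = of_nat p * S_Omega (replicate p X)"
proof (cases "p = 0")
  case True
  then show ?thesis by (simp add: mmult_def)
next
  case False
  have "mmult U S_Omega (replicate p X) = S_Omega (replicate (p - 1) X)"
    using mmult_append[of U S_Omega "replicate p X" "[]"] sum_U_replicate_X[of p S_Omega "[]"] False
    by simp
  also have "\<dots> = of_nat p / fact p"
    using S_Omega_replicate[of "p - 1" 0] of_nat_div_fact[of p, where 'a = rat] False by simp
  also have "\<dots> = of_nat p * S_Omega (replicate p X)"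
    using S_Omega_replicate[of p 0] by simp
  finally show ?thesis .
qed

lemma mmult_U_S_Omega_replicate_XY:
  "mmult U S_Omega (replicate p X @ Y # replicate n Y)
    = of_nat (p + Suc n) * S_Omega (replicate p X @ Y # replicate n Y)"
proof -
  have "replicate n Y = [] \<or> hd (replicate n Y) = Y"
    by (cases n) simp_all
  from mmult_U_after_first_Y[OF this, of S_Omega p 0]
  have "mmult U S_Omega (replicate p X @ Y # replicate n Y)
      = (if p = 0 then 0 else S_Omega (replicate (p - 1) X @ replicate (Suc n) Y))
        + S_Omega (replicate 0 X @ replicate n Y) / fact p"
    by simp
  also have "\<dots> = of_nat p / fact p / fact (Suc n) + 1 / (fact p * fact n)"
  proof (cases "p = 0")
    case False
    then show ?thesis
      using of_nat_div_fact[of p, where 'a = rat] S_Omega_replicate[of "p - 1" "Suc n"]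
        S_Omega_replicate[of 0 n]
      by (simp del: replicate_Suc fact_Suc)
  qed (use S_Omega_replicate[of 0 n] in simp)
  also have "\<dots> = of_nat (p + Suc n) / (fact p * fact (Suc n))"
    unfolding fact_Suc[of n] of_nat_add by (simp add: field_simps del: of_nat_Suc)
  also have "\<dots> = of_nat (p + Suc n) * S_Omega (replicate p X @ Y # replicate n Y)"
    using S_Omega_replicate[of p "Suc n"] by simp
  finally show ?thesis .
qed

lemma eq_replicate_Y_if_X_notin: "X \<notin> set w \<Longrightarrow> w = replicate (length w) Y"
  by (rule replicate_eqI) (simp, metis xy.exhaust)

lemma mmult_U_S_Omega_Y_before_X:
  assumes r: "r = [] \<or> hd r = Y" and X_in: "X \<in> set (replicate m X @ r)"
  shows "mmult U S_Omega (replicate p X @ Y # replicate m X @ r) = 0"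
proof -
  have "(\<Sum>j\<le>m. (-1) ^ j / (fact p * fact j) * S_Omega (replicate (m - j) X @ r)) = 0"
  proof (cases "X \<in> set r")
    case True
    with r obtain s where "r = Y # s" "X \<in> set s"
      by (cases r) auto
    then show ?thesis
      by (simp add: S_Omega_Y_before_X)
  next
    case False
    then have r_Y: "r = replicate (length r) Y" and "m > 0"
      using X_in eq_replicate_Y_if_X_notin by auto
    have "(\<Sum>j\<le>m. (-1) ^ j / (fact p * fact j) * S_Omega (replicate (m - j) X @ r))
        = (\<Sum>j\<le>m. (-1) ^ j / (fact j * fact (m - j))) / (fact p * fact (length r))"
      by (subst r_Y) (simp add: S_Omega_replicate sum_divide_distrib field_simps)
    also have "\<dots> = 0"
      using sum_alternating_inverse_fact[OF \<open>m > 0\<close>] by simp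
    finally show ?thesis .
  qed
  moreover have "S_Omega (replicate (p - 1) X @ Y # replicate m X @ r) = 0"
    using X_in by (rule S_Omega_Y_before_X)
  ultimately show ?thesis
    by (simp add: mmult_U_after_first_Y[OF r])
qed

lemma mmult_U_S_Omega: "mmult U S_Omega w = of_nat (length w) * S_Omega w"
proof -
  obtain p r where w: "w = replicate p X @ r" and r: "r = [] \<or> hd r = Y"
    by (rule X_prefix_decomposition)
  show ?thesis
  proof (cases r)
    case Nil
    then show ?thesis
      using w mmult_U_S_Omega_replicate_X by simp
  next
    case (Cons c s)
    with r w have w: "w = replicate p X @ Y # s"
      by simp
    obtain m r' where s: "s = replicate m X @ r'" and r': "r' = [] \<or> hd r' = Y"
      by (rule X_prefix_decomposition)
    show ?thesis
    proof (cases "X \<in> set s")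
      case True
      then show ?thesis
        using mmult_U_S_Omega_Y_before_X[OF r', of m p] S_Omega_Y_before_X[of s]
        by (simp add: w s)
    next
      case False
      then have "s = replicate (length s) Y"
        by (rule eq_replicate_Y_if_X_notin)
      then show ?thesis
        using mmult_U_S_Omega_replicate_XY[of p "length s"] by (simp add: w)
    qed
  qed
qed

lemma eq_if_length_eigen:
  assumes "V [] = 0" "M [] = N []"
    and M: "\<And>w. of_nat (length w) * M w = mmult V M w"
    and N: "\<And>w. of_nat (length w) * N w = mmult V N w"
  shows "M w = N w"
proof (induction w rule: length_induct)
  case (1 w)
  show ?case
  proof (cases "w = []")
    case True
    with assms show ?thesis by simp
  next
    case False
    have "V (take k w) * M (drop k w) = V (take k w) * N (drop k w)" for k
    proof (cases "k = 0")
      case False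
      with \<open>w \<noteq> []\<close> have "length (drop k w) < length w"
        by simp
      with 1 show ?thesis
        by simp
    qed (simp add: \<open>V [] = 0\<close>)
    then have "mmult V M w = mmult V N w"
      unfolding mmult_def by (intro sum.cong refl)
    then have "of_nat (length w) * M w = of_nat (length w) * N w"
      using M N by simp
    with False show ?thesis
      by simp
  qed
qed

theorem theorem5p2:
  shows "odot S_N U = S_Omega \<and> odot T_N U = T_Omega"
proof
  show S_N_U: "odot S_N U = S_Omega"
  proof
    fix w
    show "odot S_N U w = S_Omega w"
    proof (rule eq_if_length_eigen[where V = U])
      show "odot S_N U [] = S_Omega []"
        using S_Omega_replicate[of 0 0] by (simp add: odot_eq_sum_factorizations)
    qed (simp_all add: odot_S_N_eigen mmult_U_S_Omega)
  qed
  show "odot T_N U = T_Omega"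
    unfolding T_N_def T_Omega_def by (simp add: fun_eq_iff odot_mlog S_N_U)
qed

end
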